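(* Let $G=(S,T,\pi)$ be a two-person win-lose game, with representing matrix $M_G=(\pi(s,t))_{s\in S,t\in T}$. Assume $M_G$ satisfies at least one of: (1) all but finitely many rows contain finitely many $0$ entries; (2) there is a finite $N$ such that all but finitely many rows contain at most $N$ entries equal to $1$; (3) there is a finite $N$ such that all but finitely many columns contain at most $N$ entries equal to $0$; (4) all but finitely many columns contain finitely many $1$ entries. Then $G$ is totally minimax.
   Context: A two-person win-lose game is $G=(S,T,\pi)$ with non-empty sets $S,T$ (arbitrary cardinality) and $\pi:S\times T\to\{0,1\}$; rows of $M_G$ are indexed by $S$ and columns by $T$. $\Delta(X)$ is the set of probability distributions on $X$ with at most countable support; $\pi^{\mathrm{mix}}(\mathbf{p},\mathbf{q})=\sum p_sq_t\pi(s,t)$. A game has the minimax property if $\sup_{\mathbf{p}\in\Delta(S)}\inf_{\mathbf{q}\in\Delta(T)}\pi^{\mathrm{mix}}(\mathbf{p},\mathbf{q})=\inf_{\mathbf{q}\in\Delta(T)}\sup_{\mathbf{p}\in\Delta(S)}\pi^{\mathrm{mix}}(\mathbf{p},\mathbf{q})$. $G$ is totally minimax if every subgame $(S',T',\pi|_{S'\times T'})$ with non-empty $S'\subseteq S$, $T'\subseteq T$ has the minimax property. *)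

theory Defs
  imports "HOL-Analysis.Analysis"
begin

definition distr :: "'a set \<Rightarrow> ('a \<Rightarrow> real) \<Rightarrow> bool" where
  "distr X p \<longleftrightarrow> (\<forall>x. 0 \<le> p x) \<and> (\<forall>x. x \<notin> X \<longrightarrow> p x = 0)
     \<and> countable {x. p x \<noteq> 0} \<and> (p has_sum 1) X"

definition mixpay :: "'s set \<Rightarrow> 't set \<Rightarrow> ('s \<Rightarrow> 't \<Rightarrow> bool) \<Rightarrow> ('s \<Rightarrow> real) \<Rightarrow> ('t \<Rightarrow> real) \<Rightarrow> real" where
  "mixpay S T \<pi> p q = (\<Sum>\<^sub>\<infinity>(s,t)\<in>S \<times> T. p s * q t * of_bool (\<pi> s t))"

definition minimax_property :: "'s set \<Rightarrow> 't set \<Rightarrow> ('s \<Rightarrow> 't \<Rightarrow> bool) \<Rightarrow> bool" where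
  "minimax_property S T \<pi> \<longleftrightarrow>
     (SUP p\<in>{p. distr S p}. INF q\<in>{q. distr T q}. mixpay S T \<pi> p q)
   = (INF q\<in>{q. distr T q}. SUP p\<in>{p. distr S p}. mixpay S T \<pi> p q)"

definition totally_minimax :: "'s set \<Rightarrow> 't set \<Rightarrow> ('s \<Rightarrow> 't \<Rightarrow> bool) \<Rightarrow> bool" where
  "totally_minimax S T \<pi> \<longleftrightarrow>
     (\<forall>S' T'. S' \<subseteq> S \<longrightarrow> T' \<subseteq> T \<longrightarrow> S' \<noteq> {} \<longrightarrow> T' \<noteq> {} \<longrightarrow> minimax_property S' T' \<pi>)"

end

theory Submission
  imports Defs
begin

text \<open>
  It suffices to find, for every \<open>\<epsilon> > 0\<close>, finitely supported strategies \<open>p\<close> and \<open>q\<close> and a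
  value \<open>x\<close> such that \<open>p\<close> wins with probability at least \<open>x\<close> against every column and \<open>q\<close>
  lets every row win with probability at most \<open>x + \<epsilon>\<close>: then the lower and the upper value
  of the mixed extension differ by at most \<open>\<epsilon>\<close>. Finite games have such \<open>\<epsilon>\<close>-saddles by the
  multiplicative weights method, and so do games with finitely many columns, since rows with
  the same pattern are interchangeable.

  Let \<open>F\<close> be the finite set of exceptional rows. Under condition (1) one runs through a chain of
  finite column sets, each obtained from the previous one by adding all zeros of the
  non-exceptional rows used by the previous \<open>\<epsilon>\<close>-saddle; a column outside the chain is won
  by those rows and looks to the rows in \<open>F\<close> like a column already present, so the average of
  the row strategies along the chain secures the minimal value against every column up to the
  one round in which that column enters. Under condition (2) one solves the game restricted to
  \<open>F\<close> and finitely many representative rows, and then spreads each column that is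
  indistinguishable on \<open>F\<close> from infinitely many others uniformly over \<open>K\<close> of them: the rows
  in \<open>F\<close> do not notice, and a row with at most \<open>N\<close> ones gains at most \<open>N / K\<close>.
  Conditions (3) and (4) are (2) and (1) for the transposed game with complemented payoffs,
  and all four conditions pass to subgames.
\<close>

section \<open>Finitely supported distributions\<close>

definition fdist :: "'a set \<Rightarrow> ('a \<Rightarrow> real) \<Rightarrow> bool" where
  "fdist A p \<longleftrightarrow> finite A \<and> (\<forall>x. 0 \<le> p x) \<and> (\<forall>x. x \<notin> A \<longrightarrow> p x = 0) \<and> sum p A = 1"

definition fprob :: "'a set \<Rightarrow> ('a \<Rightarrow> real) \<Rightarrow> ('a \<Rightarrow> bool) \<Rightarrow> real" where
  "fprob A p P = (\<Sum>x\<in>A. p x * of_bool (P x))"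

definition uniform :: "'a set \<Rightarrow> 'a \<Rightarrow> real" where
  "uniform A x = of_bool (x \<in> A) / card A"

definition mix :: "'i set \<Rightarrow> ('i \<Rightarrow> real) \<Rightarrow> ('i \<Rightarrow> 'a \<Rightarrow> real) \<Rightarrow> 'a \<Rightarrow> real" where
  "mix I w p x = (\<Sum>i\<in>I. w i * p i x)"

lemma fprob_True: "fprob A p (\<lambda>_. True) = sum p A"
  by (simp add: fprob_def)

lemma fprob_cong: "(\<And>x. x \<in> A \<Longrightarrow> P x = Q x) \<Longrightarrow> fprob A p P = fprob A p Q"
  unfolding fprob_def by (intro sum.cong) auto

lemma fprob_nonneg: "fdist A p \<Longrightarrow> 0 \<le> fprob A p P"
  unfolding fprob_def fdist_def by (intro sum_nonneg) auto

lemma fprob_mono: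
  assumes "fdist A p" "\<And>x. x \<in> A \<Longrightarrow> P x \<Longrightarrow> Q x"
  shows "fprob A p P \<le> fprob A p Q"
  unfolding fprob_def using assms by (intro sum_mono mult_left_mono) (auto simp: fdist_def)

lemma fprob_le_1: "fdist A p \<Longrightarrow> fprob A p P \<le> 1"
  using fprob_mono[of A p P "\<lambda>_. True"] by (simp add: fprob_True fdist_def)

lemma fprob_not: "fdist A p \<Longrightarrow> fprob A p (\<lambda>x. \<not> P x) = 1 - fprob A p P"
  unfolding fprob_def fdist_def by (simp add: of_bool_not_iff algebra_simps sum_subtractf)

lemma fprob_superset:
  assumes "fdist A p" "A \<subseteq> A'" "finite A'"
  shows "fprob A' p P = fprob A p P"
  unfolding fprob_def using assms by (intro sum.mono_neutral_right) (auto simp: fdist_def)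

lemma fdist_uniform: "finite A \<Longrightarrow> A \<noteq> {} \<Longrightarrow> fdist A (uniform A)"
  by (simp add: fdist_def uniform_def sum_divide_distrib[symmetric])

lemma fprob_uniform: "finite A \<Longrightarrow> fprob A (uniform A) P = card {x\<in>A. P x} / card A"
  by (simp add: fprob_def uniform_def sum_divide_distrib[symmetric] sum.inter_filter Int_def)

lemma fprob_uniform_singleton [simp]: "fprob {a} (uniform {a}) P = of_bool (P a)"
  by (simp add: fprob_def uniform_def)

lemma fprob_mix:
  assumes "fdist I w" "\<And>i. i \<in> I \<Longrightarrow> fdist (A i) (p i)"
  shows "fprob (\<Union>i\<in>I. A i) (mix I w p) P = (\<Sum>i\<in>I. w i * fprob (A i) (p i) P)"
proof -
  have fin: "finite (\<Union>i\<in>I. A i)"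
    using assms by (auto simp: fdist_def)
  have "fprob (\<Union>i\<in>I. A i) (mix I w p) P = (\<Sum>i\<in>I. w i * fprob (\<Union>i\<in>I. A i) (p i) P)"
    unfolding fprob_def mix_def
    by (simp add: sum_distrib_left sum_distrib_right mult.assoc sum.swap[where A = I])
  also have "\<dots> = (\<Sum>i\<in>I. w i * fprob (A i) (p i) P)"
    using assms(2) fin by (intro sum.cong refl) (simp add: fprob_superset UN_upper)
  finally show ?thesis .
qed

lemma fdist_mix:
  assumes "fdist I w" "\<And>i. i \<in> I \<Longrightarrow> fdist (A i) (p i)"
  shows "fdist (\<Union>i\<in>I. A i) (mix I w p)"
proof -
  have "sum (mix I w p) (\<Union>i\<in>I. A i) = 1"
    using fprob_mix[OF assms, where P = "\<lambda>_. True"] assms by (simp add: fprob_True fdist_def)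
  moreover have "mix I w p x = 0" if "x \<notin> (\<Union>i\<in>I. A i)" for x
    using that assms(2) by (auto simp: mix_def fdist_def intro!: sum.neutral)
  ultimately show ?thesis
    using assms by (auto simp: fdist_def mix_def intro!: sum_nonneg)
qed

lemma fprob_const:
  assumes "fdist A p" "\<And>x. x \<in> A \<Longrightarrow> P x = c"
  shows "fprob A p P = of_bool c"
proof -
  have "fprob A p P = fprob A p (\<lambda>_. c)"
    using assms(2) by (rule fprob_cong)
  then show ?thesis
    using assms(1) by (cases c) (simp_all add: fprob_True fdist_def fprob_def)
qed

lemma fprob_uniform_le_add:
  assumes "finite {x\<in>T. P x}" "card {x\<in>T. P x} \<le> N"
    and "D = {t} \<and> P t = Q t \<or> D \<subseteq> T \<and> finite D \<and> card D = K"
  shows "fprob D (uniform D) P \<le> of_bool (Q t) + N / K"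
  using assms(3)
proof
  assume "D \<subseteq> T \<and> finite D \<and> card D = K"
  then have "card {x\<in>D. P x} \<le> card {x\<in>T. P x}"
    using assms(1) by (intro card_mono) auto
  then show ?thesis
    using \<open>D \<subseteq> T \<and> finite D \<and> card D = K\<close> assms(2)
    by (simp add: fprob_uniform divide_right_mono add_increasing)
qed simp

lemma fprob_average_ge:
  fixes n :: nat
  assumes "0 < n" and dist: "\<And>i. i < n \<Longrightarrow> fdist (A i) (p i)" and "x \<le> 1"
    and exception: "\<And>i i'. i < n \<Longrightarrow> i' < n \<Longrightarrow>
      fprob (A i) (p i) P < x \<Longrightarrow> fprob (A i') (p i') P < x \<Longrightarrow> i = i'"
  shows "x - 1 / n \<le> fprob (\<Union>i<n. A i) (mix {..<n} (uniform {..<n}) p) P"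
proof -
  define E where "E = {i. i < n \<and> fprob (A i) (p i) P < x}"
  have "E \<subseteq> {..<n}"
    by (auto simp: E_def)
  moreover have "finite E"
    using \<open>E \<subseteq> {..<n}\<close> by (rule finite_subset) simp
  ultimately have "card E \<le> Suc 0"
    using exception by (subst card_le_Suc0_iff_eq) (auto simp: E_def)
  have "x - of_bool (i \<in> E) \<le> fprob (A i) (p i) P" if "i < n" for i
    using fprob_nonneg[OF dist[OF that], of P] \<open>x \<le> 1\<close> that by (auto simp: E_def)
  then have "(\<Sum>i<n. x - of_bool (i \<in> E)) \<le> (\<Sum>i<n. fprob (A i) (p i) P)"
    by (intro sum_mono) auto
  moreover have "(\<Sum>i<n. x - of_bool (i \<in> E)) = n * x - card E"
    using \<open>E \<subseteq> {..<n}\<close> by (simp add: sum_subtractf Int_absorb1 flip: Int_def)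
  moreover have
    "fprob (\<Union>i<n. A i) (mix {..<n} (uniform {..<n}) p) P = (\<Sum>i<n. fprob (A i) (p i) P) / n"
    using \<open>0 < n\<close> dist
    by (subst fprob_mix) (auto intro: fdist_uniform simp: uniform_def sum_divide_distrib[symmetric])
  ultimately show ?thesis
    using \<open>0 < n\<close> \<open>card E \<le> Suc 0\<close> by (simp add: field_simps)
qed

lemma fdist_empirical:
  fixes K :: nat
  shows "0 < K \<Longrightarrow> fdist (\<Union>i<K. {a i}) (mix {..<K} (uniform {..<K}) (\<lambda>i. uniform {a i}))"
  by (intro fdist_mix fdist_uniform) auto

lemma fprob_empirical:
  fixes K :: nat
  shows "0 < K \<Longrightarrow> fprob (\<Union>i<K. {a i}) (mix {..<K} (uniform {..<K}) (\<lambda>i. uniform {a i})) P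
    = (\<Sum>i<K. of_bool (P (a i))) / K"
  by (subst fprob_mix) (auto intro: fdist_uniform simp: uniform_def sum_divide_distrib[symmetric])

lemma obtain_nat_with_div_le:
  fixes c \<epsilon> :: real
  assumes "0 < \<epsilon>"
  obtains K :: nat where "0 < K" "c / K \<le> \<epsilon>"
proof
  define K where "K = nat \<lceil>c / \<epsilon>\<rceil> + 1"
  show "0 < K"
    by (simp add: K_def)
  have "c / \<epsilon> \<le> K"
    unfolding K_def by linarith
  then show "c / K \<le> \<epsilon>"
    using assms \<open>0 < K\<close> by (simp add: field_simps)
qed

lemma finite_representatives:
  assumes "finite (f ` X)"
  obtains R where "finite R" "R \<subseteq> X" "\<And>x. x \<in> X \<Longrightarrow> \<exists>r\<in>R. f r = f x"
proof
  show "finite (inv_into X f ` f ` X)" using assms by simp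
  show "inv_into X f ` f ` X \<subseteq> X" by (auto intro: inv_into_into)
  show "\<exists>r\<in>inv_into X f ` f ` X. f r = f x" if "x \<in> X" for x
    using that by (metis f_inv_into_f image_eqI inv_into_into)
qed

lemma finite_image_patterns: "finite F \<Longrightarrow> finite ((\<lambda>x. {y\<in>F. P x y}) ` X)"
  by (rule finite_subset[where B = "Pow F"]) auto

lemma finite_elements_with_finite_fibre:
  assumes "finite (f ` X)"
  shows "finite {x\<in>X. finite {y\<in>X. f y = f x}}"
proof (rule finite_subset)
  show "{x\<in>X. finite {y\<in>X. f y = f x}} \<subseteq> (\<Union>k\<in>{k\<in>f ` X. finite {y\<in>X. f y = k}}. {y\<in>X. f y = k})"
    by blast
  show "finite (\<Union>k\<in>{k\<in>f ` X. finite {y\<in>X. f y = k}}. {y\<in>X. f y = k})"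
    using assms by (intro finite_UN_I) auto
qed

section \<open>\<open>\<epsilon>\<close>-saddles and the minimax property\<close>

definition eps_saddle :: "real \<Rightarrow> 's set \<Rightarrow> 't set \<Rightarrow> ('s \<Rightarrow> 't \<Rightarrow> bool) \<Rightarrow> bool" where
  "eps_saddle \<epsilon> S T \<pi> \<longleftrightarrow> (\<exists>A p B q x. A \<subseteq> S \<and> fdist A p \<and> B \<subseteq> T \<and> fdist B q \<and>
     (\<forall>t\<in>T. x \<le> fprob A p (\<lambda>s. \<pi> s t)) \<and> (\<forall>s\<in>S. fprob B q (\<pi> s) \<le> x + \<epsilon>))"

lemma eps_saddle_mono: "eps_saddle \<epsilon> S T \<pi> \<Longrightarrow> \<epsilon> \<le> \<epsilon>' \<Longrightarrow> eps_saddle \<epsilon>' S T \<pi>"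
  unfolding eps_saddle_def by (meson add_left_mono order_trans)

lemma SUP_INF_le_INF_SUP:
  fixes f :: "'p \<Rightarrow> 'q \<Rightarrow> 'a :: conditionally_complete_lattice"
  assumes "P \<noteq> {}" "Q \<noteq> {}"
    and below: "\<And>p. p \<in> P \<Longrightarrow> bdd_below (f p ` Q)"
    and above: "\<And>q. q \<in> Q \<Longrightarrow> bdd_above ((\<lambda>p. f p q) ` P)"
  shows "(SUP p\<in>P. INF q\<in>Q. f p q) \<le> (INF q\<in>Q. SUP p\<in>P. f p q)"
proof (intro cSUP_least cINF_greatest assms(1,2))
  fix p q assume "p \<in> P" "q \<in> Q"
  have "(INF q\<in>Q. f p q) \<le> f p q"
    using below[OF \<open>p \<in> P\<close>] \<open>q \<in> Q\<close> by (rule cINF_lower)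
  also have "\<dots> \<le> (SUP p\<in>P. f p q)"
    using \<open>p \<in> P\<close> above[OF \<open>q \<in> Q\<close>] by (rule cSUP_upper)
  finally show "(INF q\<in>Q. f p q) \<le> (SUP p\<in>P. f p q)" .
qed

lemma INF_SUP_le_SUP_INF_add:
  fixes f :: "'p \<Rightarrow> 'q \<Rightarrow> real"
  assumes "p \<in> P" "q \<in> Q" "\<forall>q'\<in>Q. x \<le> f p q'" "\<forall>p'\<in>P. f p' q \<le> x + \<epsilon>"
    and "bdd_above ((\<lambda>p. INF q\<in>Q. f p q) ` P)" "bdd_below ((\<lambda>q. SUP p\<in>P. f p q) ` Q)"
  shows "(INF q\<in>Q. SUP p\<in>P. f p q) \<le> (SUP p\<in>P. INF q\<in>Q. f p q) + \<epsilon>"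
proof -
  have "(INF q\<in>Q. SUP p\<in>P. f p q) \<le> (SUP p\<in>P. f p q)"
    using assms(6,2) by (rule cINF_lower)
  also have "\<dots> \<le> x + \<epsilon>"
    using assms(1,4) by (intro cSUP_least) auto
  also have "x \<le> (INF q\<in>Q. f p q)"
    using assms(2,3) by (intro cINF_greatest) auto
  also have "\<dots> \<le> (SUP p\<in>P. INF q\<in>Q. f p q)"
    using assms(1,5) by (rule cSUP_upper)
  finally show ?thesis by simp
qed

lemma SUP_INF_eq_INF_SUP_if_approx_saddle:
  fixes f :: "'p \<Rightarrow> 'q \<Rightarrow> real"
  assumes bounds: "\<And>p q. p \<in> P \<Longrightarrow> q \<in> Q \<Longrightarrow> a \<le> f p q \<and> f p q \<le> b"
    and saddle: "\<And>\<epsilon>. 0 < \<epsilon> \<Longrightarrow> \<exists>p\<in>P. \<exists>q\<in>Q. \<exists>x. (\<forall>q'\<in>Q. x \<le> f p q') \<and> (\<forall>p'\<in>P. f p' q \<le> x + \<epsilon>)"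
  shows "(SUP p\<in>P. INF q\<in>Q. f p q) = (INF q\<in>Q. SUP p\<in>P. f p q)" (is "?lower = ?upper")
proof -
  obtain p\<^sub>0 q\<^sub>0 where "p\<^sub>0 \<in> P" "q\<^sub>0 \<in> Q"
    using saddle[of 1] by auto
  have below: "bdd_below (f p ` Q)" if "p \<in> P" for p
    using bounds that by (intro bdd_belowI2) blast
  have above: "bdd_above ((\<lambda>p. f p q) ` P)" if "q \<in> Q" for q
    using bounds that by (intro bdd_aboveI2) blast
  have "bdd_above ((\<lambda>p. INF q\<in>Q. f p q) ` P)"
  proof (rule bdd_aboveI2)
    show "(INF q\<in>Q. f p q) \<le> b" if "p \<in> P" for p
      using below[OF that] \<open>q\<^sub>0 \<in> Q\<close> bounds[OF that \<open>q\<^sub>0 \<in> Q\<close>] by (meson cINF_lower2)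
  qed
  moreover have "bdd_below ((\<lambda>q. SUP p\<in>P. f p q) ` Q)"
  proof (rule bdd_belowI2)
    show "a \<le> (SUP p\<in>P. f p q)" if "q \<in> Q" for q
      using above[OF that] \<open>p\<^sub>0 \<in> P\<close> bounds[OF \<open>p\<^sub>0 \<in> P\<close> that] by (meson cSUP_upper2)
  qed
  ultimately have "?upper \<le> ?lower + \<epsilon>" if "0 < \<epsilon>" for \<epsilon>
    using saddle[OF that] INF_SUP_le_SUP_INF_add by metis
  moreover have "?lower \<le> ?upper"
    using \<open>p\<^sub>0 \<in> P\<close> \<open>q\<^sub>0 \<in> Q\<close> below above by (intro SUP_INF_le_INF_SUP) auto
  ultimately show ?thesis
    by (meson field_le_epsilon order.antisym)
qed

lemma fdist_distr:
  assumes "fdist A p" "A \<subseteq> S"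
  shows "distr S p"
proof -
  have "finite A" "\<And>x. x \<notin> A \<Longrightarrow> p x = 0" "sum p A = 1"
    using assms(1) by (auto simp: fdist_def)
  then have "countable {x. p x \<noteq> 0}"
    by (metis (mono_tags, lifting) countable_finite finite_subset mem_Collect_eq subsetI)
  moreover have "(p has_sum 1) S"
    using has_sum_finite[OF \<open>finite A\<close>, of p] \<open>sum p A = 1\<close> assms(2) \<open>\<And>x. x \<notin> A \<Longrightarrow> p x = 0\<close>
    by (subst has_sum_cong_neutral[where T = A and g = p]) auto
  ultimately show ?thesis
    using assms by (auto simp: distr_def fdist_def)
qed

lemma distr_weighted_summable:
  assumes "distr T q" "\<And>t. t \<in> T \<Longrightarrow> 0 \<le> g t \<and> g t \<le> 1"
  shows "(\<lambda>t. q t * g t) summable_on T"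
proof (rule summable_on_comparison_test)
  show "q summable_on T"
    using assms(1) by (auto simp: distr_def has_sum_iff)
qed (use assms in \<open>auto simp: distr_def intro: mult_left_le\<close>)

lemma distr_times_const_has_sum: "distr T q \<Longrightarrow> ((\<lambda>t. q t * c) has_sum c) T"
  using has_sum_cmult_left[where f = q and a = 1 and A = T and c = c] by (simp add: distr_def)

lemma mixpay_swap: "mixpay S T \<pi> p q = mixpay T S (\<lambda>t s. \<pi> s t) q p"
proof -
  have "bij_betw prod.swap (T \<times> S) (S \<times> T)"
    by (auto simp: bij_betw_def intro: inj_onI)
  then show ?thesis
    unfolding mixpay_def
    by (subst infsum_reindex_bij_betw[symmetric]) (auto simp: mult_ac case_prod_unfold)
qed

lemma mixpay_nonneg: "distr S p \<Longrightarrow> distr T q \<Longrightarrow> 0 \<le> mixpay S T \<pi> p q"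
  unfolding mixpay_def by (intro infsum_nonneg) (auto simp: distr_def)

lemma distr_sum_le_1: "distr X r \<Longrightarrow> finite F \<Longrightarrow> F \<subseteq> X \<Longrightarrow> sum r F \<le> 1"
  by (intro finite_sum_le_has_sum[where f = r and S = 1 and A = X]) (auto simp: distr_def)

lemma mixpay_le_1:
  assumes "distr S p" "distr T q"
  shows "mixpay S T \<pi> p q \<le> 1"
proof (cases "(\<lambda>(s, t). p s * q t * of_bool (\<pi> s t)) summable_on S \<times> T")
  case True
  have "(\<Sum>(s, t)\<in>F. p s * q t * of_bool (\<pi> s t)) \<le> 1" if "finite F" "F \<subseteq> S \<times> T" for F
  proof -
    have "(\<Sum>(s, t)\<in>F. p s * q t * of_bool (\<pi> s t)) \<le> (\<Sum>(s, t)\<in>F. p s * q t)"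
      using assms by (intro sum_mono) (auto simp: distr_def)
    also have "\<dots> \<le> (\<Sum>(s, t)\<in>fst ` F \<times> snd ` F. p s * q t)"
      using that assms
      by (intro sum_mono2) (auto simp: distr_def intro: rev_image_eqI)
    also have "\<dots> = sum p (fst ` F) * sum q (snd ` F)"
      by (simp add: sum_product sum.cartesian_product)
    also have "\<dots> \<le> 1"
    proof (intro mult_le_one)
      show "sum p (fst ` F) \<le> 1" "sum q (snd ` F) \<le> 1"
        using that assms by (auto intro!: distr_sum_le_1)
      show "0 \<le> sum q (snd ` F)"
        using assms by (auto simp: distr_def intro: sum_nonneg)
    qed
    finally show ?thesis .
  qed
  then show ?thesis
    unfolding mixpay_def using True by (intro infsum_le_finite_sums) auto
next
  case False
  then show ?thesis
    by (simp add: mixpay_def infsum_not_exists)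
qed

lemma has_sum_mixpay:
  assumes "fdist A p" "A \<subseteq> S" "distr T q"
  shows "((\<lambda>t. q t * fprob A p (\<lambda>s. \<pi> s t)) has_sum mixpay S T \<pi> p q) T"
proof -
  define g where "g t = q t * fprob A p (\<lambda>s. \<pi> s t)" for t
  have column_sums: "((\<lambda>s. p s * q t * of_bool (\<pi> s t)) has_sum g t) A" for t
  proof (rule has_sum_finiteI)
    show "finite A"
      using assms(1) by (simp add: fdist_def)
    show "g t = (\<Sum>s\<in>A. p s * q t * of_bool (\<pi> s t))"
      unfolding g_def fprob_def sum_distrib_left by (intro sum.cong refl) (simp add: mult_ac)
  qed
  have "g summable_on T"
    unfolding g_def using assms
    by (intro distr_weighted_summable) (auto intro: fprob_nonneg fprob_le_1)
  then have "((\<lambda>(t, s). p s * q t * of_bool (\<pi> s t)) has_sum infsum g T) (T \<times> A)"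
    using column_sums assms(1,3)
    by (intro has_sum_SigmaI summable_on_SigmaI[where g = g])
       (auto simp: fdist_def distr_def)
  then have "((\<lambda>(s, t). p s * q t * of_bool (\<pi> s t)) has_sum infsum g T) (A \<times> T)"
    by (subst has_sum_swap) (simp add: case_prod_unfold)
  then have "((\<lambda>(s, t). p s * q t * of_bool (\<pi> s t)) has_sum infsum g T) (S \<times> T)"
    using assms(1,2) by (subst (asm) has_sum_cong_neutral[where T = "S \<times> T"]) (auto simp: fdist_def)
  then have "mixpay S T \<pi> p q = infsum g T"
    unfolding mixpay_def by (rule infsumI)
  with \<open>g summable_on T\<close> show ?thesis
    unfolding g_def by simp
qed

lemma mixpay_ge:
  assumes "fdist A p" "A \<subseteq> S" "distr T q" "\<And>t. t \<in> T \<Longrightarrow> x \<le> fprob A p (\<lambda>s. \<pi> s t)"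
  shows "x \<le> mixpay S T \<pi> p q"
  using distr_times_const_has_sum[OF assms(3)] has_sum_mixpay[OF assms(1-3)]
  by (rule has_sum_mono) (use assms(3,4) in \<open>auto simp: distr_def intro: mult_left_mono\<close>)

lemma mixpay_le:
  assumes "distr S p" "fdist B q" "B \<subseteq> T" "\<And>s. s \<in> S \<Longrightarrow> fprob B q (\<pi> s) \<le> y"
  shows "mixpay S T \<pi> p q \<le> y"
  using has_sum_mixpay[OF assms(2,3,1)] distr_times_const_has_sum[OF assms(1)]
  unfolding mixpay_swap[of S T \<pi> p q]
  by (rule has_sum_mono) (use assms(1,4) in \<open>auto simp: distr_def intro: mult_left_mono\<close>)

lemma minimax_property_if_eps_saddle:
  assumes "\<And>\<epsilon>. 0 < \<epsilon> \<Longrightarrow> eps_saddle \<epsilon> S T \<pi>"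
  shows "minimax_property S T \<pi>"
  unfolding minimax_property_def
proof (rule SUP_INF_eq_INF_SUP_if_approx_saddle)
  show "0 \<le> mixpay S T \<pi> p q \<and> mixpay S T \<pi> p q \<le> 1"
    if "p \<in> {p. distr S p}" "q \<in> {q. distr T q}" for p q
    using that by (simp add: mixpay_nonneg mixpay_le_1)
  show "\<exists>p\<in>{p. distr S p}. \<exists>q\<in>{q. distr T q}. \<exists>x. (\<forall>q'\<in>{q. distr T q}. x \<le> mixpay S T \<pi> p q')
      \<and> (\<forall>p'\<in>{p. distr S p}. mixpay S T \<pi> p' q \<le> x + \<epsilon>)" if \<epsilon>: "0 < \<epsilon>" for \<epsilon>
  proof -
    obtain A p B q x where "A \<subseteq> S" "fdist A p" "B \<subseteq> T" "fdist B q"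
      and "\<forall>t\<in>T. x \<le> fprob A p (\<lambda>s. \<pi> s t)" "\<forall>s\<in>S. fprob B q (\<pi> s) \<le> x + \<epsilon>"
      using assms[OF \<epsilon>] unfolding eps_saddle_def by blast
    then show ?thesis
      by (intro bexI[of _ p] bexI[of _ q] exI[of _ x] conjI ballI mixpay_ge mixpay_le)
        (auto intro: fdist_distr)
  qed
qed

lemma eps_saddle_transpose:
  assumes "eps_saddle \<epsilon> T S (\<lambda>t s. \<not> \<pi> s t)"
  shows "eps_saddle \<epsilon> S T \<pi>"
proof -
  obtain B q A p x where "B \<subseteq> T" "fdist B q" "A \<subseteq> S" "fdist A p"
    and "\<forall>s\<in>S. x \<le> fprob B q (\<lambda>t. \<not> \<pi> s t)" "\<forall>t\<in>T. fprob A p (\<lambda>s. \<not> \<pi> s t) \<le> x + \<epsilon>"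
    using assms unfolding eps_saddle_def by blast
  then show ?thesis
    unfolding eps_saddle_def
    by (intro exI[of _ A] exI[of _ p] exI[of _ B] exI[of _ q] exI[of _ "1 - x - \<epsilon>"])
       (auto simp: fprob_not)
qed

text \<open>The new column strategy plays the mixture \<open>r t\<close> of the columns \<open>D t\<close> wherever the
  given one plays \<open>t\<close>.\<close>

lemma eps_saddle_extend_rows:
  assumes saddle: "eps_saddle \<delta> S\<^sub>0 T \<pi>" and "S\<^sub>0 \<subseteq> S"
    and kernel: "\<And>t. t \<in> T \<Longrightarrow> D t \<subseteq> T \<and> fdist (D t) (r t)"
    and dominated: "\<And>s. s \<in> S \<Longrightarrow> \<exists>s\<^sub>0\<in>S\<^sub>0. \<forall>t\<in>T. fprob (D t) (r t) (\<pi> s) \<le> of_bool (\<pi> s\<^sub>0 t) + c"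
  shows "eps_saddle (\<delta> + c) S T \<pi>"
proof -
  obtain A p B q x where A: "A \<subseteq> S\<^sub>0" "fdist A p" and B: "B \<subseteq> T" "fdist B q"
    and low: "\<forall>t\<in>T. x \<le> fprob A p (\<lambda>s. \<pi> s t)" and up: "\<forall>s\<in>S\<^sub>0. fprob B q (\<pi> s) \<le> x + \<delta>"
    using saddle unfolding eps_saddle_def by blast
  have kernel_B: "\<And>t. t \<in> B \<Longrightarrow> fdist (D t) (r t)"
    using kernel B by blast
  have "fprob (\<Union>t\<in>B. D t) (mix B q r) (\<pi> s) \<le> x + (\<delta> + c)" if "s \<in> S" for s
  proof -
    obtain s\<^sub>0 where "s\<^sub>0 \<in> S\<^sub>0" and s\<^sub>0: "\<forall>t\<in>T. fprob (D t) (r t) (\<pi> s) \<le> of_bool (\<pi> s\<^sub>0 t) + c"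
      using dominated \<open>s \<in> S\<close> by blast
    have "fprob (\<Union>t\<in>B. D t) (mix B q r) (\<pi> s) = (\<Sum>t\<in>B. q t * fprob (D t) (r t) (\<pi> s))"
      using B(2) kernel_B by (rule fprob_mix)
    also have "\<dots> \<le> (\<Sum>t\<in>B. q t * (of_bool (\<pi> s\<^sub>0 t) + c))"
    proof (intro sum_mono mult_left_mono)
      fix t assume "t \<in> B"
      then show "fprob (D t) (r t) (\<pi> s) \<le> of_bool (\<pi> s\<^sub>0 t) + c"
        using B(1) s\<^sub>0 by blast
      show "0 \<le> q t"
        using B(2) by (simp add: fdist_def)
    qed
    also have "\<dots> = fprob B q (\<pi> s\<^sub>0) + c"
      using B(2)
      by (simp add: fprob_def fdist_def distrib_left sum.distrib sum_distrib_right[symmetric])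
    also have "\<dots> \<le> x + (\<delta> + c)"
      using up \<open>s\<^sub>0 \<in> S\<^sub>0\<close> by simp
    finally show ?thesis .
  qed
  moreover have "fdist (\<Union>t\<in>B. D t) (mix B q r)"
    using B(2) kernel_B by (rule fdist_mix)
  moreover have "(\<Union>t\<in>B. D t) \<subseteq> T"
    using kernel B by blast
  ultimately show ?thesis
    using A low \<open>S\<^sub>0 \<subseteq> S\<close> unfolding eps_saddle_def by blast
qed

section \<open>Finite games\<close>

lemma exp_neg_div_one_minus_le:
  fixes \<eta> :: real
  assumes "0 \<le> \<eta>" "\<eta> < 1"
  shows "exp (- \<eta> / (1 - \<eta>)) \<le> 1 - \<eta>"
proof -
  have "ln (1 / (1 - \<eta>)) \<le> 1 / (1 - \<eta>) - 1"
    using assms by (intro ln_le_minus_one) auto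
  then have "- \<eta> / (1 - \<eta>) \<le> ln (1 - \<eta>)"
    using assms by (simp add: ln_div field_simps)
  then show ?thesis
    using assms by (metis diff_gt_0_iff_gt exp_le_cancel_iff exp_ln)
qed

locale multiplicative_weights =
  fixes B :: "'b set" and \<pi> :: "'a \<Rightarrow> 'b \<Rightarrow> bool" and \<eta> :: real
    and respond :: "('b \<Rightarrow> real) \<Rightarrow> 'a"
  assumes finite_B: "finite B" and B_nonempty: "B \<noteq> {}" and \<eta>: "0 < \<eta>" "\<eta> < 1"
begin

primrec weight :: "nat \<Rightarrow> 'b \<Rightarrow> real" where
  "weight 0 = (\<lambda>_. 1)"
| "weight (Suc k) = (\<lambda>b. weight k b * (if \<pi> (respond (weight k)) b then 1 - \<eta> else 1))"

declare weight.simps(2) [simp del]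

definition play :: "nat \<Rightarrow> 'a" where
  "play k = respond (weight k)"

definition total :: "nat \<Rightarrow> real" where
  "total k = (\<Sum>b\<in>B. weight k b)"

definition strategy :: "nat \<Rightarrow> 'b \<Rightarrow> real" where
  "strategy k b = (if b \<in> B then weight k b / total k else 0)"

definition gain :: "nat \<Rightarrow> real" where
  "gain k = fprob B (strategy k) (\<pi> (play k))"

lemma weight_Suc: "weight (Suc k) b = weight k b * (if \<pi> (play k) b then 1 - \<eta> else 1)"
  by (simp add: play_def weight.simps(2))

lemma weight_pos: "0 < weight k b"
  using \<eta> by (induction k) (auto simp: weight_Suc)

lemma total_pos: "0 < total k"
  unfolding total_def using finite_B B_nonempty weight_pos by (intro sum_pos) auto

lemma fprob_strategy: "fprob B (strategy k) P = fprob B (weight k) P / total k"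
  by (simp add: fprob_def strategy_def sum_divide_distrib)

lemma fdist_strategy: "fdist B (strategy k)"
  using fprob_strategy[of k "\<lambda>_. True"] total_pos[of k] weight_pos[of k] finite_B
  by (auto simp: fdist_def strategy_def fprob_True total_def[symmetric] less_imp_le)

lemma total_Suc: "total (Suc k) = total k * (1 - \<eta> * gain k)"
proof -
  have "total (Suc k) = (\<Sum>b\<in>B. weight k b - \<eta> * (weight k b * of_bool (\<pi> (play k) b)))"
    unfolding total_def by (intro sum.cong) (auto simp: weight_Suc algebra_simps)
  also have "\<dots> = total k * (1 - \<eta> * gain k)"
    using total_pos[of k] unfolding gain_def fprob_strategy
    by (simp add: fprob_def total_def sum_subtractf sum_distrib_left field_simps)
  finally show ?thesis .
qed

lemma total_le: "total k \<le> card B * exp (- \<eta> * (\<Sum>i<k. gain i))"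
proof (induction k)
  case 0
  show ?case by (simp add: total_def)
next
  case (Suc k)
  have "total (Suc k) \<le> total k * exp (- \<eta> * gain k)"
    unfolding total_Suc using total_pos[of k] exp_ge_add_one_self[of "- \<eta> * gain k"]
    by (intro mult_left_mono) auto
  also have "\<dots> \<le> card B * exp (- \<eta> * (\<Sum>i<k. gain i)) * exp (- \<eta> * gain k)"
    using Suc.IH by (intro mult_right_mono) auto
  also have "\<dots> = card B * exp (- \<eta> * (\<Sum>i<Suc k. gain i))"
    by (simp add: algebra_simps exp_add[symmetric])
  finally show ?case .
qed

lemma weight_ge: "exp (- \<eta> / (1 - \<eta>) * (\<Sum>i<k. of_bool (\<pi> (play i) b))) \<le> weight k b"
proof (induction k)
  case 0
  show ?case by simp
next
  case (Suc k)
  show ?case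
  proof (cases "\<pi> (play k) b")
    case True
    have "exp (- \<eta> / (1 - \<eta>) * (\<Sum>i<Suc k. of_bool (\<pi> (play i) b)))
        = exp (- \<eta> / (1 - \<eta>) * (\<Sum>i<k. of_bool (\<pi> (play i) b))) * exp (- \<eta> / (1 - \<eta>))"
      using True by (simp add: algebra_simps exp_add[symmetric])
    also have "\<dots> \<le> weight k b * (1 - \<eta>)"
      using Suc.IH exp_neg_div_one_minus_le \<eta>
      by (intro mult_mono) (auto simp: less_imp_le weight_pos)
    finally show ?thesis
      using True by (simp add: weight_Suc)
  next
    case False
    then show ?thesis
      using Suc.IH by (simp add: weight_Suc)
  qed
qed

lemma regret_bound:
  assumes "b \<in> B"
  shows "(1 - \<eta>) * (\<Sum>i<k. gain i) \<le> ln (card B) / \<eta> + (\<Sum>i<k. of_bool (\<pi> (play i) b))"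
proof -
  let ?hits = "\<Sum>i<k. of_bool (\<pi> (play i) b) :: real"
  have "exp (- \<eta> / (1 - \<eta>) * ?hits) \<le> weight k b"
    by (rule weight_ge)
  also have "\<dots> \<le> total k"
    unfolding total_def using assms finite_B weight_pos
    by (intro member_le_sum) (auto intro: less_imp_le)
  also have "\<dots> \<le> card B * exp (- \<eta> * (\<Sum>i<k. gain i))"
    by (rule total_le)
  finally have "- \<eta> / (1 - \<eta>) * ?hits \<le> ln (card B) - \<eta> * (\<Sum>i<k. gain i)"
    using finite_B B_nonempty
    by (simp add: ln_le_cancel_iff[symmetric] ln_mult card_gt_0_iff del: ln_le_cancel_iff)
  then have "(1 - \<eta>) * (\<Sum>i<k. gain i) \<le> (1 - \<eta>) * (ln (card B) / \<eta>) + ?hits"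
    using \<eta> by (simp add: field_simps)
  also have "(1 - \<eta>) * (ln (card B) / \<eta>) \<le> ln (card B) / \<eta>"
    using \<eta> finite_B B_nonempty by (intro mult_left_le_one_le) (auto simp: card_gt_0_iff Suc_le_eq)
  finally show ?thesis by simp
qed

lemma average_hits_ge:
  assumes "b \<in> B" "0 < K" and minimal: "\<And>i. i < K \<Longrightarrow> gain j \<le> gain i"
  shows "gain j - \<eta> - ln (card B) / (\<eta> * K) \<le> (\<Sum>i<K. of_bool (\<pi> (play i) b)) / K"
proof -
  have "gain j \<le> 1"
    using fdist_strategy by (simp add: gain_def fprob_le_1)
  then have "gain j - \<eta> \<le> (1 - \<eta>) * gain j"
    using \<eta> by (simp add: algebra_simps mult_left_le)
  have "(1 - \<eta>) * (K * gain j) \<le> (1 - \<eta>) * (\<Sum>i<K. gain i)"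
    using minimal sum_mono[of "{..<K}" "\<lambda>_. gain j" gain] \<eta> by (intro mult_left_mono) auto
  also have "\<dots> \<le> ln (card B) / \<eta> + (\<Sum>i<K. of_bool (\<pi> (play i) b))"
    using assms(1) by (rule regret_bound)
  finally have "(1 - \<eta>) * gain j \<le> ln (card B) / (\<eta> * K) + (\<Sum>i<K. of_bool (\<pi> (play i) b)) / K"
    using \<open>0 < K\<close> by (simp add: field_simps)
  with \<open>gain j - \<eta> \<le> (1 - \<eta>) * gain j\<close> show ?thesis
    by linarith
qed

end

lemma ex_best_response:
  assumes "finite S" "S \<noteq> {}"
  obtains respond :: "('t \<Rightarrow> real) \<Rightarrow> 's" where
    "\<And>w. respond w \<in> S" "\<And>w s. s \<in> S \<Longrightarrow> fprob T w (\<pi> s) \<le> fprob T w (\<pi> (respond w))"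
proof -
  have "\<exists>s'. s' \<in> S \<and> (\<forall>s\<in>S. fprob T w (\<pi> s) \<le> fprob T w (\<pi> s'))" for w :: "'t \<Rightarrow> real"
  proof -
    have "Max ((\<lambda>s. fprob T w (\<pi> s)) ` S) \<in> (\<lambda>s. fprob T w (\<pi> s)) ` S"
      using assms by (intro Max_in) auto
    then obtain s' where "s' \<in> S" "fprob T w (\<pi> s') = Max ((\<lambda>s. fprob T w (\<pi> s)) ` S)"
      by auto
    then show ?thesis
      using assms by (auto intro: Max_ge)
  qed
  then show ?thesis
    using that choice[of "\<lambda>w s'. s' \<in> S \<and> (\<forall>s\<in>S. fprob T w (\<pi> s) \<le> fprob T w (\<pi> s'))"]
    by blast
qed

text \<open>The row player mixes its replies of the first \<open>K\<close> rounds uniformly; the column player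
  uses the weights of the round in which the reply gains least.\<close>

lemma eps_saddle_finite:
  fixes S :: "'s set" and T :: "'t set"
  assumes S: "finite S" "S \<noteq> {}" and T: "finite T" "T \<noteq> {}" and "0 < \<epsilon>"
  shows "eps_saddle \<epsilon> S T \<pi>"
proof -
  obtain respond :: "('t \<Rightarrow> real) \<Rightarrow> 's" where respond_in: "\<And>w. respond w \<in> S"
    and best: "\<And>w s. s \<in> S \<Longrightarrow> fprob T w (\<pi> s) \<le> fprob T w (\<pi> (respond w))"
    using ex_best_response[OF S, where T = T and \<pi> = \<pi>] by blast
  define \<eta> :: real where "\<eta> = min (\<epsilon> / 2) (1 / 2)"
  have \<eta>: "0 < \<eta>" "\<eta> \<le> \<epsilon> / 2" "\<eta> < 1"
    using \<open>0 < \<epsilon>\<close> by (auto simp: \<eta>_def)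
  interpret mw: multiplicative_weights T \<pi> \<eta> respond
    using T \<eta> by unfold_locales auto
  obtain K :: nat where "0 < K" "ln (card T) / \<eta> / K \<le> \<epsilon> / 2"
    using half_gt_zero[OF \<open>0 < \<epsilon>\<close>] by (rule obtain_nat_with_div_le)
  define j where "j = arg_min_on mw.gain {..<K}"
  have "j < K" and j_min: "\<And>i. i < K \<Longrightarrow> mw.gain j \<le> mw.gain i"
    using \<open>0 < K\<close> arg_min_if_finite(1)[of "{..<K}" mw.gain] arg_min_least[of "{..<K}" _ mw.gain]
    by (auto simp: j_def)
  have response: "fprob T (mw.strategy j) (\<pi> s) \<le> mw.gain j" if "s \<in> S" for s
    unfolding mw.gain_def mw.fprob_strategy mw.play_def
    using best[OF that] mw.total_pos[of j] by (intro divide_right_mono) (auto intro: less_imp_le)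
  have average: "mw.gain j - \<epsilon> \<le> (\<Sum>i<K. of_bool (\<pi> (mw.play i) t)) / K" if "t \<in> T" for t
    using mw.average_hits_ge[OF that \<open>0 < K\<close> j_min] \<eta> \<open>ln (card T) / \<eta> / K \<le> \<epsilon> / 2\<close>
    by (simp add: field_simps)
  show ?thesis
    unfolding eps_saddle_def
    using fdist_empirical[OF \<open>0 < K\<close>, of mw.play] fprob_empirical[OF \<open>0 < K\<close>, of mw.play]
      average mw.fdist_strategy response respond_in
    by (intro exI[of _ "\<Union>i<K. {mw.play i}"] exI[of _ "mix {..<K} (uniform {..<K}) (\<lambda>i. uniform {mw.play i})"]
        exI[of _ T] exI[of _ "mw.strategy j"] exI[of _ "mw.gain j - \<epsilon>"])
      (auto simp: mw.play_def)
qed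

lemma eps_saddle_finite_cols:
  fixes S :: "'s set" and T :: "'t set"
  assumes "S \<noteq> {}" "finite T" "T \<noteq> {}" "0 < \<epsilon>"
  shows "eps_saddle \<epsilon> S T \<pi>"
proof -
  obtain R where "finite R" "R \<subseteq> S" and rep: "\<And>s. s \<in> S \<Longrightarrow> \<exists>r\<in>R. {t\<in>T. \<pi> r t} = {t\<in>T. \<pi> s t}"
    using finite_representatives[OF finite_image_patterns[OF \<open>finite T\<close>, of \<pi> S]] by blast
  have "R \<noteq> {}"
    using rep \<open>S \<noteq> {}\<close> by blast
  have "eps_saddle (\<epsilon> + 0) S T \<pi>"
  proof (rule eps_saddle_extend_rows[where D = "\<lambda>t. {t}" and r = "\<lambda>t. uniform {t}"])
    show "eps_saddle \<epsilon> R T \<pi>"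
      using assms \<open>finite R\<close> \<open>R \<noteq> {}\<close> by (intro eps_saddle_finite)
    show "\<exists>r\<in>R. \<forall>t\<in>T. fprob {t} (uniform {t}) (\<pi> s) \<le> of_bool (\<pi> r t) + 0" if s: "s \<in> S" for s
    proof -
      obtain r where "r \<in> R" "{t\<in>T. \<pi> r t} = {t\<in>T. \<pi> s t}"
        using rep[OF s] by blast
      then show ?thesis
        by (intro bexI[of _ r]) (auto simp: set_eq_iff)
    qed
  qed (use \<open>R \<subseteq> S\<close> in \<open>auto intro: fdist_uniform\<close>)
  then show ?thesis
    by simp
qed

lemma eps_saddle_finite_rows:
  assumes "finite S" "S \<noteq> {}" "T \<noteq> {}" "0 < \<epsilon>"
  shows "eps_saddle \<epsilon> S T \<pi>"
  by (rule eps_saddle_transpose, rule eps_saddle_finite_cols) (use assms in auto)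

lemma eps_saddle_finite_cols_choice:
  fixes S :: "'s set"
  assumes "S \<noteq> {}" "0 < \<epsilon>"
  obtains A p B q x where "\<And>X :: 't set. finite X \<Longrightarrow> X \<noteq> {} \<Longrightarrow>
      A X \<subseteq> S \<and> fdist (A X) (p X) \<and> B X \<subseteq> X \<and> fdist (B X) (q X) \<and>
      (\<forall>t\<in>X. x X \<le> fprob (A X) (p X) (\<lambda>s. \<pi> s t)) \<and> (\<forall>s\<in>S. fprob (B X) (q X) (\<pi> s) \<le> x X + \<epsilon>)"
proof -
  have "\<forall>X :: 't set. \<exists>A p B q x. finite X \<and> X \<noteq> {} \<longrightarrow>
      A \<subseteq> S \<and> fdist A p \<and> B \<subseteq> X \<and> fdist B q \<and>
      (\<forall>t\<in>X. x \<le> fprob A p (\<lambda>s. \<pi> s t)) \<and> (\<forall>s\<in>S. fprob B q (\<pi> s) \<le> x + \<epsilon>)"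
    using eps_saddle_finite_cols[OF \<open>S \<noteq> {}\<close> _ _ \<open>0 < \<epsilon>\<close>, where \<pi> = \<pi>]
    unfolding eps_saddle_def by metis
  then show ?thesis
    using that by metis
qed

section \<open>Rows with finitely many zeros\<close>

lemma eps_saddle_average_along_chain:
  fixes n :: nat
  assumes "0 < n"
    and chain: "\<And>i. C i \<subseteq> C (Suc i)" and "\<And>i. C i \<noteq> {}" "\<And>i. C i \<subseteq> T"
    and rows: "\<And>i. A i \<subseteq> S \<and> fdist (A i) (p i)"
    and secure: "\<And>i t. t \<in> T \<Longrightarrow> t \<in> C i \<or> t \<notin> C (Suc i) \<Longrightarrow> x i \<le> fprob (A i) (p i) (\<lambda>s. \<pi> s t)"
    and cols: "\<And>i. B i \<subseteq> T \<and> fdist (B i) (q i) \<and> (\<forall>s\<in>S. fprob (B i) (q i) (\<pi> s) \<le> x i + \<delta>)"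
  shows "eps_saddle (\<delta> + 1 / n) S T \<pi>"
proof -
  have at_most_1: "x i \<le> 1" for i
  proof -
    obtain t where "t \<in> C i"
      using \<open>C i \<noteq> {}\<close> by blast
    then show ?thesis
      using secure[of t i] \<open>C i \<subseteq> T\<close> fprob_le_1 rows[of i] by (meson order.trans subsetD)
  qed
  define j where "j = arg_min_on x {..<n}"
  have "j < n" and j_min: "\<And>i. i < n \<Longrightarrow> x j \<le> x i"
    using \<open>0 < n\<close> arg_min_if_finite(1)[of "{..<n}" x] arg_min_least[of "{..<n}" _ x]
    by (auto simp: j_def)
  have entry_unique: "i = i'" if "t \<in> C (Suc i) - C i" "t \<in> C (Suc i') - C i'" for t i i'
    using that lift_Suc_mono_le[of C, OF chain]
    by (metis Diff_iff Suc_leI linorder_neqE_nat subsetD)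
  have low: "x j - 1 / n \<le> fprob (\<Union>i<n. A i) (mix {..<n} (uniform {..<n}) p) (\<lambda>s. \<pi> s t)"
    if "t \<in> T" for t
  proof (rule fprob_average_ge)
    fix i i' assume "i < n" "i' < n"
      and "fprob (A i) (p i) (\<lambda>s. \<pi> s t) < x j" "fprob (A i') (p i') (\<lambda>s. \<pi> s t) < x j"
    then have "t \<in> C (Suc i) - C i" "t \<in> C (Suc i') - C i'"
      using secure[OF \<open>t \<in> T\<close>] j_min by (meson DiffI order.trans not_le)+
    then show "i = i'"
      by (rule entry_unique)
  qed (use \<open>0 < n\<close> rows at_most_1 in auto)
  have "fdist (\<Union>i<n. A i) (mix {..<n} (uniform {..<n}) p)"
    using rows \<open>0 < n\<close> by (auto intro!: fdist_mix fdist_uniform)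
  then show ?thesis
    unfolding eps_saddle_def using rows cols[of j] low
    by (intro exI[of _ "\<Union>i<n. A i"] exI[of _ "mix {..<n} (uniform {..<n}) p"] exI[of _ "B j"] exI[of _ "q j"]
        exI[of _ "x j - 1 / n"]) auto
qed

lemma column_chain_closing_zeros:
  fixes S :: "'s set" and T :: "'t set"
  assumes "S \<noteq> {}" "0 < \<delta>" "finite T\<^sub>0" "T\<^sub>0 \<noteq> {}" "T\<^sub>0 \<subseteq> T"
    and finite_zeros: "\<And>s. s \<in> S - F \<Longrightarrow> finite {t\<in>T. \<not> \<pi> s t}"
  obtains C A p B q x where
    "\<And>i. C i \<subseteq> C (Suc i)" "\<And>i. T\<^sub>0 \<subseteq> C i" "\<And>i. C i \<subseteq> T"
    "\<And>i. A i \<subseteq> S \<and> fdist (A i) (p i)"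
    "\<And>i. B i \<subseteq> T \<and> fdist (B i) (q i) \<and> (\<forall>s\<in>S. fprob (B i) (q i) (\<pi> s) \<le> x i + \<delta>)"
    "\<And>i t. t \<in> C i \<Longrightarrow> x i \<le> fprob (A i) (p i) (\<lambda>s. \<pi> s t)"
    "\<And>i s t. s \<in> A i - F \<Longrightarrow> t \<in> T - C (Suc i) \<Longrightarrow> \<pi> s t"
proof -
  obtain A p B q x where saddle: "\<And>X. finite X \<Longrightarrow> X \<noteq> {} \<Longrightarrow>
      A X \<subseteq> S \<and> fdist (A X) (p X) \<and> B X \<subseteq> X \<and> fdist (B X) (q X) \<and>
      (\<forall>t\<in>X. x X \<le> fprob (A X) (p X) (\<lambda>s. \<pi> s t)) \<and> (\<forall>s\<in>S. fprob (B X) (q X) (\<pi> s) \<le> x X + \<delta>)"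
    using eps_saddle_finite_cols_choice[OF \<open>S \<noteq> {}\<close> \<open>0 < \<delta>\<close>, where \<pi> = \<pi>] by metis
  define C where "C i = ((\<lambda>X. X \<union> (\<Union>s\<in>A X - F. {t\<in>T. \<not> \<pi> s t})) ^^ i) T\<^sub>0" for i
  have C_Suc: "C (Suc i) = C i \<union> (\<Union>s\<in>A (C i) - F. {t\<in>T. \<not> \<pi> s t})" for i
    by (simp add: C_def)
  have C: "finite (C i) \<and> C i \<noteq> {} \<and> C i \<subseteq> T" for i
  proof (induction i)
    case 0
    then show ?case
      using assms(3-5) by (simp add: C_def)
  next
    case (Suc i)
    then have "finite (A (C i))" "A (C i) \<subseteq> S"
      using saddle[of "C i"] by (auto simp: fdist_def)
    then have "finite (\<Union>s\<in>A (C i) - F. {t\<in>T. \<not> \<pi> s t})"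
      using finite_zeros by auto
    then show ?case
      using Suc by (auto simp: C_Suc)
  qed
  have "C 0 \<subseteq> C i" for i
    by (rule lift_Suc_mono_le[of C]) (auto simp: C_Suc)
  then have "T\<^sub>0 \<subseteq> C i" for i
    by (simp add: C_def)
  show thesis
  proof (rule that[of C "\<lambda>i. A (C i)" "\<lambda>i. p (C i)" "\<lambda>i. B (C i)" "\<lambda>i. q (C i)" "\<lambda>i. x (C i)"])
    show "B (C i) \<subseteq> T \<and> fdist (B (C i)) (q (C i)) \<and>
        (\<forall>s\<in>S. fprob (B (C i)) (q (C i)) (\<pi> s) \<le> x (C i) + \<delta>)" for i
      using saddle[of "C i"] C[of i] by auto
    show "x (C i) \<le> fprob (A (C i)) (p (C i)) (\<lambda>s. \<pi> s t)" if "t \<in> C i" for i t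
      using saddle[of "C i"] C[of i] that by auto
  qed (use saddle C \<open>\<And>i. T\<^sub>0 \<subseteq> C i\<close> in \<open>auto simp: C_Suc\<close>)
qed

lemma eps_saddle_if_almost_all_rows_finitely_many_zeros:
  fixes S :: "'s set" and T :: "'t set"
  assumes "S \<noteq> {}" "T \<noteq> {}" and "finite {s\<in>S. infinite {t\<in>T. \<not> \<pi> s t}}" and "0 < \<epsilon>"
  shows "eps_saddle \<epsilon> S T \<pi>"
proof -
  define F where "F = {s\<in>S. infinite {t\<in>T. \<not> \<pi> s t}}"
  have "finite F"
    using assms(3) by (simp add: F_def)
  obtain T\<^sub>0 where "finite T\<^sub>0" "T\<^sub>0 \<subseteq> T" and rep: "\<And>t. t \<in> T \<Longrightarrow> \<exists>r\<in>T\<^sub>0. {f\<in>F. \<pi> f r} = {f\<in>F. \<pi> f t}"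
    using finite_representatives[OF finite_image_patterns[OF \<open>finite F\<close>, of "\<lambda>t f. \<pi> f t" T]]
    by blast
  have "T\<^sub>0 \<noteq> {}"
    using rep \<open>T \<noteq> {}\<close> by blast
  have finite_zeros: "\<And>s. s \<in> S - F \<Longrightarrow> finite {t\<in>T. \<not> \<pi> s t}"
    by (auto simp: F_def)
  obtain C A p B q x where chain: "\<And>i. C i \<subseteq> C (Suc i)" and "\<And>i. T\<^sub>0 \<subseteq> C i" "\<And>i. C i \<subseteq> T"
    and rows: "\<And>i. A i \<subseteq> S \<and> fdist (A i) (p i)"
    and cols: "\<And>i. B i \<subseteq> T \<and> fdist (B i) (q i) \<and> (\<forall>s\<in>S. fprob (B i) (q i) (\<pi> s) \<le> x i + \<epsilon> / 2)"
    and low: "\<And>i t. t \<in> C i \<Longrightarrow> x i \<le> fprob (A i) (p i) (\<lambda>s. \<pi> s t)"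
    and late_wins: "\<And>i s t. s \<in> A i - F \<Longrightarrow> t \<in> T - C (Suc i) \<Longrightarrow> \<pi> s t"
    using column_chain_closing_zeros[where F = F and \<pi> = \<pi>, OF \<open>S \<noteq> {}\<close> half_gt_zero[OF \<open>0 < \<epsilon>\<close>]
        \<open>finite T\<^sub>0\<close> \<open>T\<^sub>0 \<noteq> {}\<close> \<open>T\<^sub>0 \<subseteq> T\<close> finite_zeros] by blast
  have secure: "x i \<le> fprob (A i) (p i) (\<lambda>s. \<pi> s t)" if "t \<in> T" "t \<in> C i \<or> t \<notin> C (Suc i)" for i t
  proof (cases "t \<in> C i")
    case True
    then show ?thesis
      by (rule low)
  next
    case False
    with that have "t \<in> T - C (Suc i)"
      by blast
    obtain r where "r \<in> T\<^sub>0" and r: "{f\<in>F. \<pi> f r} = {f\<in>F. \<pi> f t}"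
      using rep \<open>t \<in> T\<close> by blast
    have "x i \<le> fprob (A i) (p i) (\<lambda>s. \<pi> s r)"
      using \<open>r \<in> T\<^sub>0\<close> \<open>T\<^sub>0 \<subseteq> C i\<close> by (intro low) blast
    also have "\<dots> \<le> fprob (A i) (p i) (\<lambda>s. \<pi> s t)"
      using rows[of i] r late_wins[of _ i t] \<open>t \<in> T - C (Suc i)\<close> by (intro fprob_mono) blast+
    finally show ?thesis .
  qed
  obtain n :: nat where "0 < n" "1 / n \<le> \<epsilon> / 2"
    using half_gt_zero[OF \<open>0 < \<epsilon>\<close>] by (rule obtain_nat_with_div_le)
  have nonempty: "C i \<noteq> {}" for i
    using \<open>T\<^sub>0 \<noteq> {}\<close> \<open>T\<^sub>0 \<subseteq> C i\<close> by blast
  have "eps_saddle (\<epsilon> / 2 + 1 / n) S T \<pi>"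
    using \<open>0 < n\<close> chain nonempty \<open>\<And>i. C i \<subseteq> T\<close> rows secure cols
    by (rule eps_saddle_average_along_chain)
  then show ?thesis
    by (rule eps_saddle_mono) (use \<open>1 / n \<le> \<epsilon> / 2\<close> in linarith)
qed

section \<open>Rows with boundedly many ones\<close>

lemma ex_spreading:
  assumes "0 < K"
  obtains D where "\<And>t. t \<in> T \<Longrightarrow> D t \<subseteq> {t'\<in>T. f t' = f t} \<and> finite (D t) \<and> D t \<noteq> {} \<and>
      (finite {t'\<in>T. f t' = f t} \<longrightarrow> D t = {t}) \<and> (infinite {t'\<in>T. f t' = f t} \<longrightarrow> card (D t) = K)"
proof -
  have "\<forall>t\<in>T. \<exists>D. D \<subseteq> {t'\<in>T. f t' = f t} \<and> finite D \<and> D \<noteq> {} \<and>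
      (finite {t'\<in>T. f t' = f t} \<longrightarrow> D = {t}) \<and> (infinite {t'\<in>T. f t' = f t} \<longrightarrow> card D = K)"
  proof
    fix t assume "t \<in> T"
    show "\<exists>D. D \<subseteq> {t'\<in>T. f t' = f t} \<and> finite D \<and> D \<noteq> {} \<and>
      (finite {t'\<in>T. f t' = f t} \<longrightarrow> D = {t}) \<and> (infinite {t'\<in>T. f t' = f t} \<longrightarrow> card D = K)"
    proof (cases "finite {t'\<in>T. f t' = f t}")
      case True
      then show ?thesis
        using \<open>t \<in> T\<close> by (intro exI[of _ "{t}"]) auto
    next
      case False
      then obtain D where "finite D" "card D = K" "D \<subseteq> {t'\<in>T. f t' = f t}"
        using infinite_arbitrarily_large by blast
      then show ?thesis
        using False \<open>0 < K\<close> by (intro exI[of _ D]) auto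
    qed
  qed
  from bchoice[OF this] obtain D
    where D: "\<forall>t\<in>T. D t \<subseteq> {t'\<in>T. f t' = f t} \<and> finite (D t) \<and> D t \<noteq> {} \<and>
      (finite {t'\<in>T. f t' = f t} \<longrightarrow> D t = {t}) \<and> (infinite {t'\<in>T. f t' = f t} \<longrightarrow> card (D t) = K)" ..
  show thesis
    by (rule that) (rule D[rule_format])
qed

lemma eps_saddle_if_almost_all_rows_boundedly_many_ones:
  fixes S :: "'s set" and T :: "'t set"
  assumes "S \<noteq> {}" "T \<noteq> {}" and "finite {s\<in>S. \<not> (finite {t\<in>T. \<pi> s t} \<and> card {t\<in>T. \<pi> s t} \<le> N)}"
    and "0 < \<epsilon>"
  shows "eps_saddle \<epsilon> S T \<pi>"
proof -
  define F where "F = {s\<in>S. \<not> (finite {t\<in>T. \<pi> s t} \<and> card {t\<in>T. \<pi> s t} \<le> N)}"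
  define key where "key t = {f\<in>F. \<pi> f t}" for t
  define T\<^sub>f where "T\<^sub>f = {t\<in>T. finite {t'\<in>T. key t' = key t}}"
  have "finite F"
    using assms(3) by (simp add: F_def)
  then have "finite T\<^sub>f"
    unfolding T\<^sub>f_def key_def by (intro finite_elements_with_finite_fibre finite_image_patterns)
  obtain S\<^sub>1 where "finite S\<^sub>1" "S\<^sub>1 \<subseteq> S"
    and rep: "\<And>s. s \<in> S \<Longrightarrow> \<exists>r\<in>S\<^sub>1. {t\<in>T\<^sub>f. \<pi> r t} = {t\<in>T\<^sub>f. \<pi> s t}"
    using finite_representatives[OF finite_image_patterns[OF \<open>finite T\<^sub>f\<close>, of \<pi> S]] by blast
  have "S\<^sub>1 \<noteq> {}"
    using rep \<open>S \<noteq> {}\<close> by blast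
  obtain K :: nat where "0 < K" "N / K \<le> \<epsilon> / 2"
    using half_gt_zero[OF \<open>0 < \<epsilon>\<close>] by (rule obtain_nat_with_div_le)
  obtain D where D: "\<And>t. t \<in> T \<Longrightarrow> D t \<subseteq> {t'\<in>T. key t' = key t} \<and> finite (D t) \<and> D t \<noteq> {} \<and>
      (finite {t'\<in>T. key t' = key t} \<longrightarrow> D t = {t}) \<and>
      (infinite {t'\<in>T. key t' = key t} \<longrightarrow> card (D t) = K)"
    using ex_spreading[OF \<open>0 < K\<close>, where T = T and f = key] by blast
  have dominated:
    "\<exists>s\<^sub>0\<in>F \<union> S\<^sub>1. \<forall>t\<in>T. fprob (D t) (uniform (D t)) (\<pi> s) \<le> of_bool (\<pi> s\<^sub>0 t) + N / K"
    if "s \<in> S" for s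
  proof (cases "s \<in> F")
    case True
    have "fprob (D t) (uniform (D t)) (\<pi> s) = of_bool (\<pi> s t)" if "t \<in> T" for t
      using D[OF that] \<open>s \<in> F\<close> by (intro fprob_const fdist_uniform) (auto simp: key_def)
    then show ?thesis
      using True by (intro bexI[of _ s]) auto
  next
    case False
    then have ones: "finite {t\<in>T. \<pi> s t}" "card {t\<in>T. \<pi> s t} \<le> N"
      using \<open>s \<in> S\<close> by (auto simp: F_def)
    obtain r where "r \<in> S\<^sub>1" and r: "{t\<in>T\<^sub>f. \<pi> r t} = {t\<in>T\<^sub>f. \<pi> s t}"
      using rep \<open>s \<in> S\<close> by blast
    have "D t = {t} \<and> \<pi> s t = \<pi> r t \<or> D t \<subseteq> T \<and> finite (D t) \<and> card (D t) = K" if "t \<in> T" for t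
    proof (cases "t \<in> T\<^sub>f")
      case True
      then show ?thesis
        using D[OF that] r by (blast elim: equalityE)
    qed (use D[OF that] that in \<open>auto simp: T\<^sub>f_def\<close>)
    then show ?thesis
      using \<open>r \<in> S\<^sub>1\<close> by (intro bexI[of _ r] ballI fprob_uniform_le_add[OF ones]) auto
  qed
  have "eps_saddle (\<epsilon> / 2 + N / K) S T \<pi>"
  proof (rule eps_saddle_extend_rows[where S\<^sub>0 = "F \<union> S\<^sub>1" and D = D and r = "\<lambda>t. uniform (D t)"])
    show "eps_saddle (\<epsilon> / 2) (F \<union> S\<^sub>1) T \<pi>"
      using \<open>finite F\<close> \<open>finite S\<^sub>1\<close> \<open>S\<^sub>1 \<noteq> {}\<close> \<open>T \<noteq> {}\<close> \<open>0 < \<epsilon>\<close>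
      by (intro eps_saddle_finite_rows) auto
    show "D t \<subseteq> T \<and> fdist (D t) (uniform (D t))" if "t \<in> T" for t
      using D[OF that] by (auto simp: fdist_uniform)
  qed (use \<open>S\<^sub>1 \<subseteq> S\<close> dominated in \<open>auto simp: F_def\<close>)
  then show ?thesis
    by (rule eps_saddle_mono) (use \<open>N / K \<le> \<epsilon> / 2\<close> in linarith)
qed

lemma eps_saddle_if_almost_all_cols_finitely_many_ones:
  assumes "S \<noteq> {}" "T \<noteq> {}" and "finite {t\<in>T. infinite {s\<in>S. \<pi> s t}}" and "0 < \<epsilon>"
  shows "eps_saddle \<epsilon> S T \<pi>"
  by (rule eps_saddle_transpose, rule eps_saddle_if_almost_all_rows_finitely_many_zeros)
    (use assms in auto)

lemma eps_saddle_if_almost_all_cols_boundedly_many_zeros: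
  assumes "S \<noteq> {}" "T \<noteq> {}"
    and "finite {t\<in>T. \<not> (finite {s\<in>S. \<not> \<pi> s t} \<and> card {s\<in>S. \<not> \<pi> s t} \<le> N)}" and "0 < \<epsilon>"
  shows "eps_saddle \<epsilon> S T \<pi>"
  by (rule eps_saddle_transpose, rule eps_saddle_if_almost_all_rows_boundedly_many_ones)
    (use assms in auto)

section \<open>Subgames\<close>

lemma finite_exceptional_rows_subgame:
  assumes "finite {s\<in>S. \<not> P {t\<in>T. R s t}}" "S' \<subseteq> S" "T' \<subseteq> T"
    and downward_closed: "\<And>X Y. X \<subseteq> Y \<Longrightarrow> P Y \<Longrightarrow> P X"
  shows "finite {s\<in>S'. \<not> P {t\<in>T'. R s t}}"
proof (rule finite_subset[OF _ assms(1)])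
  show "{s\<in>S'. \<not> P {t\<in>T'. R s t}} \<subseteq> {s\<in>S. \<not> P {t\<in>T. R s t}}"
    using assms(2,3) downward_closed[of "{t\<in>T'. R s t}" "{t\<in>T. R s t}" for s] by blast
qed

lemma finite_card_le_subset: "X \<subseteq> Y \<Longrightarrow> finite Y \<and> card Y \<le> N \<Longrightarrow> finite X \<and> card X \<le> N"
  by (meson card_mono finite_subset order_trans)

theorem corollary3p2:
  fixes S :: "'s set" and T :: "'t set" and \<pi> :: "'s \<Rightarrow> 't \<Rightarrow> bool"
  assumes "S \<noteq> {}" and "T \<noteq> {}"
  assumes "finite {s\<in>S. infinite {t\<in>T. \<not> \<pi> s t}}
    \<or> (\<exists>N::nat. finite {s\<in>S. \<not> (finite {t\<in>T. \<pi> s t} \<and> card {t\<in>T. \<pi> s t} \<le> N)})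
    \<or> (\<exists>N::nat. finite {t\<in>T. \<not> (finite {s\<in>S. \<not> \<pi> s t} \<and> card {s\<in>S. \<not> \<pi> s t} \<le> N)})
    \<or> finite {t\<in>T. infinite {s\<in>S. \<pi> s t}}"
  shows "totally_minimax S T \<pi>"
  unfolding totally_minimax_def
proof (intro allI impI minimax_property_if_eps_saddle)
  fix S' T' and \<epsilon> :: real
  assume sub: "S' \<subseteq> S" "T' \<subseteq> T" and ne: "S' \<noteq> {}" "T' \<noteq> {}" and "0 < \<epsilon>"
  from assms(3) show "eps_saddle \<epsilon> S' T' \<pi>"
  proof (elim disjE exE)
    assume "finite {s\<in>S. infinite {t\<in>T. \<not> \<pi> s t}}"
    from finite_exceptional_rows_subgame[OF this sub finite_subset] show ?thesis
      by (rule eps_saddle_if_almost_all_rows_finitely_many_zeros[OF ne _ \<open>0 < \<epsilon>\<close>])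
  next
    fix N :: nat
    assume "finite {s\<in>S. \<not> (finite {t\<in>T. \<pi> s t} \<and> card {t\<in>T. \<pi> s t} \<le> N)}"
    from finite_exceptional_rows_subgame[OF this sub finite_card_le_subset] show ?thesis
      by (rule eps_saddle_if_almost_all_rows_boundedly_many_ones[OF ne _ \<open>0 < \<epsilon>\<close>])
  next
    fix N :: nat
    assume "finite {t\<in>T. \<not> (finite {s\<in>S. \<not> \<pi> s t} \<and> card {s\<in>S. \<not> \<pi> s t} \<le> N)}"
    from finite_exceptional_rows_subgame[OF this sub(2,1) finite_card_le_subset] show ?thesis
      by (rule eps_saddle_if_almost_all_cols_boundedly_many_zeros[OF ne _ \<open>0 < \<epsilon>\<close>])
  next
    assume "finite {t\<in>T. infinite {s\<in>S. \<pi> s t}}"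
    from finite_exceptional_rows_subgame[OF this sub(2,1) finite_subset] show ?thesis
      by (rule eps_saddle_if_almost_all_cols_finitely_many_ones[OF ne _ \<open>0 < \<epsilon>\<close>])
  qed
qed

end
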